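(* Let $\ket{GHZ_3}=\frac{1}{\sqrt{3}}(\ket{000}+\ket{111}+\ket{222})\in\mathbb{C}^3\otimes\mathbb{C}^3\otimes\mathbb{C}^3$, shared among three parties $A,B,C$. Then for every normalized three-qubit pure state $\ket{\phi}\in\mathbb{C}^2\otimes\mathbb{C}^2\otimes\mathbb{C}^2$ (with the $i$-th qubit held by the $i$-th party), $\ket{GHZ_3}$ can be transformed into $\ket{\phi}$ by LOCC; i.e., $\ket{GHZ_3}$ is a common resource for the set of all three-qubit pure states.
   Context: An LOCC transformation is one implementable by local quantum operations of the three parties together with classical communication among them; "$\ket{\psi}$ can be transformed into $\ket{\phi}$ by LOCC" means there is such a protocol producing $\ket{\phi}$ from $\ket{\psi}$ with probability one (local embeddings of $\mathbb{C}^2$ into $\mathbb{C}^3$ are allowed, i.e. the output qubits are regarded as two-dimensional subspaces of the local spaces). A common resource for a set $S$ of states is a state that can be transformed by LOCC into every state of $S$. *)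

theory Defs
  imports Complex_Main "HOL-Library.Numeral_Type"
begin

text \<open>Tripartite pure states (unnormalised) on C^3 (x) C^3 (x) C^3, indexed by the
  finite type 3; three-qubit states on C^2 (x) C^2 (x) C^2, indexed by the type 2.
  A local operator on C^3 is a 3x3 complex matrix M, with M i j the (i,j) entry.\<close>

type_synonym qutrit_state = "3 \<Rightarrow> 3 \<Rightarrow> 3 \<Rightarrow> complex"
type_synonym qubit_state = "2 \<Rightarrow> 2 \<Rightarrow> 2 \<Rightarrow> complex"
type_synonym op3 = "3 \<Rightarrow> 3 \<Rightarrow> complex"

definition GHZ3 :: qutrit_state where
  "GHZ3 a b c = (if a = b \<and> b = c then complex_of_real (1 / sqrt 3) else 0)"

definition normalized_qubit :: "qubit_state \<Rightarrow> bool" where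
  "normalized_qubit \<phi> \<longleftrightarrow> (\<Sum>x\<in>UNIV. \<Sum>y\<in>UNIV. \<Sum>z\<in>UNIV. (cmod (\<phi> x y z))\<^sup>2) = 1"

text \<open>Standard local embedding of C^2 into C^3: basis vector |i> goes to |i>, i = 0,1.\<close>
definition emb :: "2 \<Rightarrow> 3" where
  "emb x = of_int (Rep_bit0 x)"

definition embed_state :: "qubit_state \<Rightarrow> qutrit_state" where
  "embed_state \<phi> a b c =
     (\<Sum>x\<in>UNIV. \<Sum>y\<in>UNIV. \<Sum>z\<in>UNIV.
        if a = emb x \<and> b = emb y \<and> c = emb z then \<phi> x y z else 0)"

text \<open>Local operator M applied by party p (0 = A, 1 = B, 2 = C).\<close>
definition apply_local :: "nat \<Rightarrow> op3 \<Rightarrow> qutrit_state \<Rightarrow> qutrit_state" where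
  "apply_local p M \<psi> a b c =
     (if p = 0 then (\<Sum>a'\<in>UNIV. M a a' * \<psi> a' b c)
      else if p = 1 then (\<Sum>b'\<in>UNIV. M b b' * \<psi> a b' c)
      else (\<Sum>c'\<in>UNIV. M c c' * \<psi> a b c'))"

definition kraus_complete :: "op3 list \<Rightarrow> bool" where
  "kraus_complete Ms \<longleftrightarrow>
     (\<forall>j l. (\<Sum>M\<leftarrow>Ms. \<Sum>i\<in>UNIV. cnj (M i j) * M i l) = (if j = l then 1 else 0))"

text \<open>Finite-round LOCC protocol trees on (unnormalised) branch states: at each node one
  party performs a local measurement whose outcome is broadcast, and the protocol continues
  on every branch.  A leaf is successful if its branch state is proportional to the target
  (the zero vector, i.e. probability-zero branches, included).\<close>
inductive locc_tree :: "(qutrit_state \<Rightarrow> bool) \<Rightarrow> qutrit_state \<Rightarrow> bool" for Good where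
  leaf: "Good \<psi> \<Longrightarrow> locc_tree Good \<psi>"
| step: "p < 3 \<Longrightarrow> kraus_complete Ms \<Longrightarrow>
         (\<And>M. M \<in> set Ms \<Longrightarrow> locc_tree Good (apply_local p M \<psi>)) \<Longrightarrow> locc_tree Good \<psi>"

definition LOCC_transformable :: "qutrit_state \<Rightarrow> qutrit_state \<Rightarrow> bool" where
  "LOCC_transformable \<psi> \<phi> \<longleftrightarrow> locc_tree (\<lambda>\<chi>. \<exists>c::complex. \<chi> = (\<lambda>a b d. c * \<phi> a b d)) \<psi>"

end

theory Submission
  imports Defs
begin

text \<open>Every three-qubit state is a sum \<open>\<phi> = \<Sum>\<^sub>k a\<^sub>k \<otimes> b\<^sub>k \<otimes> c\<^sub>k\<close> of three product terms in
  which the \<open>a\<^sub>k\<close> and \<open>c\<^sub>k\<close> are unit vectors, \<open>a\<^sub>1 \<perp> a\<^sub>2\<close>, and \<open>b\<^sub>1, b\<^sub>2\<close> are multiples of one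
  unit vector \<open>u \<perp> b\<^sub>0\<close>: expand Bob's qubit in an orthonormal basis \<open>g, h\<close> for which the
  slice \<open>\<langle>g|\<^sub>B \<phi>\<close> has rank one, which amounts to solving a quadratic equation.
  In qutrit language \<open>\<phi> = (A \<otimes> B \<otimes> C) \<Sum>\<^sub>k |kkk\<rangle>\<close> with these vectors as columns.

  The GHZ vector is invariant under \<open>W\<^sub>1 \<otimes> W\<^sub>2 \<otimes> W\<^sub>3\<close> for monomial matrices
  \<open>|k\<rangle> \<mapsto> f\<^sub>i(k) |k + s\<rangle>\<close> with a common shift \<open>s\<close> and \<open>f\<^sub>1 f\<^sub>2 f\<^sub>3 = 1\<close>. So if a party measures
  with Kraus operators \<open>M W\<close>, the others undo \<open>W\<close> by local unitaries and the state becomes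
  \<open>M\<close> applied to GHZ. Bob measures \<open>B W\<close> over all shifts and Fourier phases, Charlie \<open>C W\<close>
  over Fourier phases, and finally Alice \<open>A\<close> and \<open>A diag(1,-1,-1)\<close>, complete because
  \<open>a\<^sub>1 \<perp> a\<^sub>2\<close>; in her second outcome Bob restores the signs by the reflection in \<open>u\<^sup>\<perp>\<close>.\<close>

lemma exhaust_2: "(x :: 2) = 0 \<or> x = 1"
proof (cases x)
  case (of_int z)
  then have "z = 0 \<or> z = 1" by auto
  with of_int show ?thesis by auto
qed

lemma exhaust_3: "(x :: 3) = 0 \<or> x = 1 \<or> x = 2"
proof (cases x)
  case (of_int z)
  then have "z = 0 \<or> z = 1 \<or> z = 2" by auto
  with of_int show ?thesis by auto
qed

lemma UNIV_2: "(UNIV :: 2 set) = {0, 1}"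
  using exhaust_2 by auto

lemma UNIV_3: "(UNIV :: 3 set) = {0, 1, 2}"
  using exhaust_3 by auto

lemma sum_UNIV_2: "(\<Sum>x\<in>UNIV. f x) = f (0 :: 2) + f 1"
  unfolding UNIV_2 by (subst sum.insert) auto

lemma sum_UNIV_3: "(\<Sum>x\<in>UNIV. f x) = f (0 :: 3) + f 1 + f 2"
  unfolding UNIV_3 by (simp add: add.assoc)

definition cinner :: "('n::finite \<Rightarrow> complex) \<Rightarrow> ('n \<Rightarrow> complex) \<Rightarrow> complex" where
  "cinner u v = (\<Sum>x\<in>UNIV. cnj (u x) * v x)"

definition gram :: "('m::finite \<Rightarrow> 'n \<Rightarrow> complex) \<Rightarrow> 'n \<Rightarrow> 'n \<Rightarrow> complex" where
  "gram X j l = cinner (\<lambda>i. X i j) (\<lambda>i. X i l)"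

definition mat_mul :: "('a \<Rightarrow> 'b::finite \<Rightarrow> complex) \<Rightarrow> ('b \<Rightarrow> 'c \<Rightarrow> complex) \<Rightarrow> 'a \<Rightarrow> 'c \<Rightarrow> complex" where
  "mat_mul X Y i k = (\<Sum>m\<in>UNIV. X i m * Y m k)"

definition mat_id :: "'n \<Rightarrow> 'n \<Rightarrow> complex" where
  "mat_id i k = (if i = k then 1 else 0)"

definition mat_scale :: "complex \<Rightarrow> ('a \<Rightarrow> 'b \<Rightarrow> complex) \<Rightarrow> 'a \<Rightarrow> 'b \<Rightarrow> complex" where
  "mat_scale c X i k = c * X i k"

definition shift_phase :: "'n::group_add \<Rightarrow> ('n \<Rightarrow> complex) \<Rightarrow> 'n \<Rightarrow> 'n \<Rightarrow> complex" where
  "shift_phase s f i k = (if i = k + s then f k else 0)"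

text \<open>\<open>(X \<otimes> Y \<otimes> Z)\<close> applied to the unnormalised GHZ vector \<open>\<Sum>\<^sub>k |kkk\<rangle>\<close>.\<close>
definition ghz_image ::
  "('a \<Rightarrow> 'k::finite \<Rightarrow> complex) \<Rightarrow> ('b \<Rightarrow> 'k \<Rightarrow> complex) \<Rightarrow> ('c \<Rightarrow> 'k \<Rightarrow> complex) \<Rightarrow> 'a \<Rightarrow> 'b \<Rightarrow> 'c \<Rightarrow> complex"
  where "ghz_image X Y Z a b c = (\<Sum>k\<in>UNIV. X a k * Y b k * Z c k)"

lemma cinner_self: "cinner v v = complex_of_real (\<Sum>x\<in>UNIV. (cmod (v x))\<^sup>2)"
  unfolding cinner_def of_real_sum
  by (simp add: complex_norm_square mult.commute del: of_real_power)

lemma cinner_mat_id_columns: "cinner (\<lambda>i. mat_id i j) (\<lambda>i. mat_id i l) = mat_id j l"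
proof -
  have delta: "(\<lambda>i. cnj (mat_id i j) * mat_id i l) = (\<lambda>i. if j = i then mat_id j l else 0)"
    by (auto simp: mat_id_def)
  show ?thesis
    unfolding cinner_def delta by simp
qed

lemma gram_mat_scale: "gram (mat_scale c X) j l = cnj c * c * gram X j l"
  unfolding gram_def cinner_def mat_scale_def by (simp add: sum_distrib_left ac_simps)

lemma cinner_scale_right: "cinner u (\<lambda>i. t * v i) = t * cinner u v"
  by (simp add: cinner_def sum_distrib_left ac_simps)

lemma gram_swap: "gram X l j = cnj (gram X j l)"
  by (simp add: gram_def cinner_def mult.commute)

lemma mat_mul_mat_id_left [simp]: "mat_mul mat_id X = X"
proof (intro ext)
  fix i k
  have delta: "(\<lambda>m. mat_id i m * X m k) = (\<lambda>m. if i = m then X m k else 0)"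
    by (auto simp: mat_id_def)
  show "mat_mul mat_id X i k = X i k"
    unfolding mat_mul_def delta by simp
qed

lemma mat_mul_mat_id_right [simp]: "mat_mul X mat_id = X"
  by (auto simp: mat_mul_def mat_id_def if_distrib cong: if_cong intro!: ext)

lemma mat_mul_shift_phase: "mat_mul X (shift_phase s f) i k = X i (k + s) * f k"
  by (simp add: mat_mul_def shift_phase_def if_distrib cong: if_cong)

lemma mat_mul_shift_phase_shift_phase_0:
  "mat_mul (mat_mul X (shift_phase s f)) (shift_phase 0 g) = mat_mul X (shift_phase s (\<lambda>k. f k * g k))"
  by (simp add: mat_mul_shift_phase mult.assoc ext)

lemma shift_phase_0_one: "shift_phase 0 (\<lambda>_. 1) = mat_id"
  by (auto simp: shift_phase_def mat_id_def intro!: ext)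

lemma ghz_image_mat_scale:
  "ghz_image (mat_scale c X) Y Z = (\<lambda>a b d. c * ghz_image X Y Z a b d)"
  "ghz_image X (mat_scale c Y) Z = (\<lambda>a b d. c * ghz_image X Y Z a b d)"
  "ghz_image X Y (mat_scale c Z) = (\<lambda>a b d. c * ghz_image X Y Z a b d)"
  by (simp_all add: ghz_image_def mat_scale_def sum_distrib_left ac_simps fun_eq_iff)

lemma ghz_image_shift_phase:
  fixes s :: "'k::{finite, group_add}"
  assumes "\<And>k. f k * g k * h k = 1"
  shows "ghz_image (mat_mul X (shift_phase s f)) (mat_mul Y (shift_phase s g)) (mat_mul Z (shift_phase s h))
       = ghz_image X Y Z"
proof (intro ext)
  fix a b c
  have "ghz_image (mat_mul X (shift_phase s f)) (mat_mul Y (shift_phase s g)) (mat_mul Z (shift_phase s h)) a b c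
      = (\<Sum>k\<in>UNIV. X a (k + s) * Y b (k + s) * Z c (k + s) * (f k * g k * h k))"
    unfolding ghz_image_def mat_mul_shift_phase by (simp add: ac_simps)
  also have "\<dots> = (\<Sum>k\<in>UNIV. X a (k + s) * Y b (k + s) * Z c (k + s))"
    using assms by simp
  also have "\<dots> = ghz_image X Y Z a b c"
    unfolding ghz_image_def
    by (rule sum.reindex_bij_witness[where i = "\<lambda>k. k - s" and j = "\<lambda>k. k + s"]) auto
  finally show "ghz_image (mat_mul X (shift_phase s f)) (mat_mul Y (shift_phase s g))
      (mat_mul Z (shift_phase s h)) a b c = ghz_image X Y Z a b c" .
qed

lemma apply_local_ghz_image:
  "apply_local 0 M (ghz_image X Y Z) = ghz_image (mat_mul M X) Y Z"
  "apply_local (Suc 0) M (ghz_image X Y Z) = ghz_image X (mat_mul M Y) Z"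
  "apply_local 2 M (ghz_image X Y Z) = ghz_image X Y (mat_mul M Z)"
  unfolding apply_local_def ghz_image_def mat_mul_def
  by (auto simp: sum_distrib_left sum_distrib_right ac_simps intro!: ext) (subst sum.swap; simp add: ac_simps)+

lemma apply_local_scale:
  "apply_local p M (\<lambda>a b c. s * \<psi> a b c) = (\<lambda>a b c. s * apply_local p M \<psi> a b c)"
  by (auto simp: apply_local_def sum_distrib_left ac_simps intro!: ext)

lemma gram_mat_mul_shift_phase:
  "gram (mat_mul X (shift_phase s f)) j l = cnj (f j) * f l * gram X (j + s) (l + s)"
  unfolding gram_def cinner_def mat_mul_shift_phase by (simp add: sum_distrib_left ac_simps)

lemma cnj_inverse_sqrt:
  assumes "r > 0"
  shows "cnj (complex_of_real (1 / sqrt r)) * complex_of_real (1 / sqrt r) * complex_of_real r = 1"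
proof -
  have "1 / sqrt r * (1 / sqrt r) * r = 1"
    using assms by (simp add: real_sqrt_mult_self)
  then show ?thesis
    by (simp only: complex_cnj_complex_of_real of_real_1 flip: of_real_mult)
qed

lemma LOCC_transformable_scaled_target: "LOCC_transformable (\<lambda>a b c. s * \<phi> a b c) \<phi>"
  unfolding LOCC_transformable_def by (rule locc_tree.leaf) blast

lemma LOCC_transformable_measurement:
  assumes "p < 3" "kraus_complete Ms" "\<And>M. M \<in> set Ms \<Longrightarrow> LOCC_transformable (apply_local p M \<psi>) \<phi>"
  shows "LOCC_transformable \<psi> \<phi>"
  using assms unfolding LOCC_transformable_def by (rule locc_tree.step)

lemma LOCC_transformable_scale_source:
  assumes "LOCC_transformable \<psi> \<phi>"
  shows "LOCC_transformable (\<lambda>a b c. s * \<psi> a b c) \<phi>"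
  using assms unfolding LOCC_transformable_def
proof (induction rule: locc_tree.induct)
  case (leaf \<psi>)
  then obtain c where "\<psi> = (\<lambda>a b d. c * \<phi> a b d)" by blast
  then show ?case
    by (auto intro!: locc_tree.leaf exI[of _ "s * c"] simp: mult.assoc)
next
  case (step p Ms \<psi>)
  then show ?case
    by (auto intro: locc_tree.step[of p Ms] simp: apply_local_scale)
qed

lemma kraus_complete_iff_gram:
  "kraus_complete Ms \<longleftrightarrow> (\<forall>j l. (\<Sum>M\<leftarrow>Ms. gram M j l) = (if j = l then 1 else 0))"
  by (simp add: kraus_complete_def gram_def cinner_def)

text \<open>Composing with diagonal phases multiplies \<open>\<Sum> M\<^sup>\<dagger> M\<close> entrywise by \<open>\<Sum> F\<^sup>\<dagger> F\<close>;
  for Fourier phases the latter is diagonal, so only the diagonal of \<open>\<Sum> M\<^sup>\<dagger> M\<close> matters.\<close>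
lemma kraus_complete_dephased:
  assumes "\<And>k l. (\<Sum>M\<leftarrow>Ms. gram M k l) * (\<Sum>f\<leftarrow>Fs. cnj (f k) * f l) = (if k = l then 1 else 0)"
  shows "kraus_complete [mat_mul M (shift_phase 0 f). M \<leftarrow> Ms, f \<leftarrow> Fs]"
  unfolding kraus_complete_iff_gram
proof (intro allI)
  fix k l
  have "(\<Sum>N\<leftarrow>[mat_mul M (shift_phase 0 f). M \<leftarrow> Ms, f \<leftarrow> Fs]. gram N k l)
      = (\<Sum>M\<leftarrow>Ms. \<Sum>f\<leftarrow>Fs. gram M k l * (cnj (f k) * f l))"
    by (induct Ms) (simp_all add: gram_mat_mul_shift_phase o_def mult.commute)
  also have "\<dots> = (\<Sum>M\<leftarrow>Ms. gram M k l) * (\<Sum>f\<leftarrow>Fs. cnj (f k) * f l)"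
    by (simp add: sum_list_const_mult sum_list_mult_const)
  finally show "(\<Sum>N\<leftarrow>[mat_mul M (shift_phase 0 f). M \<leftarrow> Ms, f \<leftarrow> Fs]. gram N k l)
      = (if k = l then 1 else 0)"
    using assms by simp
qed

lemma kraus_complete_shift_phase:
  assumes "\<And>k. cmod (f k) = 1"
  shows "kraus_complete [shift_phase s f]"
  unfolding kraus_complete_iff_gram
proof (intro allI)
  fix j l
  have entries: "(\<lambda>i. cnj (shift_phase s f i j) * shift_phase s f i l)
      = (\<lambda>i. if i = j + s then (if j = l then cnj (f j) * f l else 0) else 0)"
    by (auto simp: shift_phase_def)
  have "cnj (f x) * f x = 1" for x
    using complex_norm_square[of "f x"] assms by (simp add: mult.commute)
  then have "gram (shift_phase s f) j l = (if j = l then 1 else 0)"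
    unfolding gram_def cinner_def entries by simp
  then show "(\<Sum>M\<leftarrow>[shift_phase s f]. gram M j l) = (if j = l then 1 else 0)"
    by simp
qed

lemma kraus_complete_mat_id: "kraus_complete [mat_id]"
  using kraus_complete_shift_phase[of "\<lambda>_. 1" 0] by (simp add: shift_phase_0_one)

lemma LOCC_transformable_local_unitaries:
  assumes "kraus_complete [U1]" "kraus_complete [U2]" "kraus_complete [U3]"
    and "LOCC_transformable (ghz_image (mat_mul U1 X) (mat_mul U2 Y) (mat_mul U3 Z)) \<phi>"
  shows "LOCC_transformable (ghz_image X Y Z) \<phi>"
proof -
  have "LOCC_transformable (ghz_image (mat_mul U1 X) (mat_mul U2 Y) Z) \<phi>"
    by (rule LOCC_transformable_measurement[of 2 "[U3]"]) (use assms in \<open>simp_all add: apply_local_ghz_image\<close>)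
  moreover have "LOCC_transformable (ghz_image (mat_mul U1 X) Y Z) \<phi>"
    if "LOCC_transformable (ghz_image (mat_mul U1 X) (mat_mul U2 Y) Z) \<phi>"
    by (rule LOCC_transformable_measurement[of 1 "[U2]"]) (use assms that in \<open>simp_all add: apply_local_ghz_image\<close>)
  moreover have "LOCC_transformable (ghz_image X Y Z) \<phi>"
    if "LOCC_transformable (ghz_image (mat_mul U1 X) Y Z) \<phi>"
    by (rule LOCC_transformable_measurement[of 0 "[U1]"]) (use assms that in \<open>simp_all add: apply_local_ghz_image\<close>)
  ultimately show ?thesis by blast
qed

definition omega :: complex where
  "omega = Complex (- 1 / 2) (sqrt 3 / 2)"

text \<open>The discrete Fourier phases \<open>dft j k = \<omega>\<^bsup>j k\<^esup>\<close> for the cube root of unity \<open>\<omega>\<close>.\<close>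
definition dft :: "3 \<Rightarrow> 3 \<Rightarrow> complex" where
  "dft j k = (if j = 0 \<or> k = 0 then 1 else if j = k then omega else cnj omega)"

lemma omega_unimodular: "cnj omega * omega = 1"
  by (simp add: omega_def complex_eq_iff field_simps power2_eq_square)

lemma omega_square: "omega * omega = cnj omega"
  by (simp add: omega_def complex_eq_iff field_simps power2_eq_square)

lemma cnj_omega_square: "cnj omega * cnj omega = omega"
  by (metis complex_cnj_cnj complex_cnj_mult omega_square)

lemma sum_roots_of_unity: "1 + omega + cnj omega = 0"
  by (simp add: omega_def complex_eq_iff)

lemma norm_dft: "cmod (dft j k) = 1"
  by (simp add: dft_def omega_def cmod_def power_divide)

lemma dft_unimodular: "cnj (dft j k) * dft j k = 1"
  using omega_unimodular by (auto simp: dft_def mult.commute)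

lemma dft_orthogonal: "(\<Sum>f\<leftarrow>map dft [0, 1, 2]. cnj (f k) * f l) = (if k = l then 3 else 0)"
  using exhaust_3[of k] exhaust_3[of l] omega_unimodular omega_square cnj_omega_square sum_roots_of_unity
  by (auto simp: dft_def mult.commute add_ac)

lemma trace_gram_pos:
  fixes X :: "'m::finite \<Rightarrow> 'n::finite \<Rightarrow> complex"
  assumes "X i0 k0 \<noteq> 0"
  obtains r where "r > 0" "(\<Sum>k\<in>UNIV. gram X k k) = complex_of_real r"
proof
  define r where "r = (\<Sum>k\<in>UNIV. \<Sum>i\<in>UNIV. (cmod (X i k))\<^sup>2)"
  show "(\<Sum>k\<in>UNIV. gram X k k) = complex_of_real r"
    by (simp add: r_def gram_def cinner_self of_real_sum)
  have "0 < (cmod (X i0 k0))\<^sup>2"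
    using assms by simp
  also have "\<dots> \<le> (\<Sum>i\<in>UNIV. (cmod (X i k0))\<^sup>2)"
    by (rule member_le_sum) auto
  also have "\<dots> \<le> r"
    unfolding r_def by (rule member_le_sum[where f = "\<lambda>k. \<Sum>i\<in>UNIV. (cmod (X i k))\<^sup>2"])
      (auto intro: sum_nonneg)
  finally show "r > 0" .
qed

lemma kraus_complete_shift_dft:
  fixes B :: "3 \<Rightarrow> 3 \<Rightarrow> complex"
  assumes "cnj \<beta> * \<beta> * (\<Sum>k\<in>UNIV. gram B k k) * 3 = 1"
  shows "kraus_complete [mat_mul M (shift_phase 0 f).
    M \<leftarrow> [mat_mul (mat_scale \<beta> B) (shift_phase a (\<lambda>_. 1)). a \<leftarrow> [0, 1, 2]], f \<leftarrow> map dft [0, 1, 2]]"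
proof (rule kraus_complete_dephased)
  fix k l :: 3
  let ?Ms = "[mat_mul (mat_scale \<beta> B) (shift_phase a (\<lambda>_. 1)). a \<leftarrow> [0, 1, 2]]"
  have "(\<Sum>M\<leftarrow>?Ms. gram M k k) = cnj \<beta> * \<beta> * (\<Sum>a\<in>UNIV. gram B (k + a) (k + a))"
    by (simp add: sum_UNIV_3 gram_mat_mul_shift_phase gram_mat_scale algebra_simps)
  also have "(\<Sum>a\<in>UNIV. gram B (k + a) (k + a)) = (\<Sum>a\<in>UNIV. gram B a a)"
    by (rule sum.reindex_bij_witness[where i = "\<lambda>a. a - k" and j = "\<lambda>a. k + a"]) auto
  finally have "(\<Sum>M\<leftarrow>?Ms. gram M k k) * 3 = 1"
    using assms by simp
  then show "(\<Sum>M\<leftarrow>?Ms. gram M k l) * (\<Sum>f\<leftarrow>map dft [0, 1, 2]. cnj (f k) * f l)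
      = (if k = l then 1 else 0)"
    by (simp only: dft_orthogonal) auto
qed

lemma LOCC_bob_round:
  fixes B :: "3 \<Rightarrow> 3 \<Rightarrow> complex"
  assumes nonzero: "B i0 k0 \<noteq> 0"
    and next_round: "LOCC_transformable (ghz_image mat_id B mat_id) \<phi>"
  shows "LOCC_transformable (ghz_image mat_id mat_id mat_id) \<phi>"
proof -
  obtain r where "r > 0" and trace: "(\<Sum>k\<in>UNIV. gram B k k) = complex_of_real r"
    using trace_gram_pos[of B, OF nonzero] by blast
  define \<beta> where "\<beta> = complex_of_real (1 / sqrt (3 * r))"
  have "cnj \<beta> * \<beta> * (\<Sum>k\<in>UNIV. gram B k k) * 3 = 1"
    using cnj_inverse_sqrt[of "3 * r"] \<open>r > 0\<close> by (simp add: \<beta>_def trace ac_simps)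
  then show ?thesis
  proof (rule kraus_complete_shift_dft[THEN LOCC_transformable_measurement[of 1, rotated]])
    fix M
    assume "M \<in> set [mat_mul M (shift_phase 0 f).
      M \<leftarrow> [mat_mul (mat_scale \<beta> B) (shift_phase a (\<lambda>_. 1)). a \<leftarrow> [0, 1, 2]], f \<leftarrow> map dft [0, 1, 2]]"
    then obtain a j where M: "M = mat_mul (mat_scale \<beta> B) (shift_phase a (dft j))"
      by (auto simp: mat_mul_shift_phase_shift_phase_0)
    have "ghz_image (mat_mul (shift_phase a (\<lambda>k. cnj (dft j k))) mat_id) (mat_mul mat_id M)
          (mat_mul (shift_phase a (\<lambda>_. 1)) mat_id)
        = ghz_image (mat_mul mat_id (shift_phase a (\<lambda>k. cnj (dft j k)))) M
          (mat_mul mat_id (shift_phase a (\<lambda>_. 1)))"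
      by simp
    also have "\<dots> = ghz_image mat_id (mat_scale \<beta> B) mat_id"
      unfolding M by (rule ghz_image_shift_phase) (simp add: dft_unimodular)
    finally have "LOCC_transformable (ghz_image (mat_mul (shift_phase a (\<lambda>k. cnj (dft j k))) mat_id)
        (mat_mul mat_id M) (mat_mul (shift_phase a (\<lambda>_. 1)) mat_id)) \<phi>"
      using LOCC_transformable_scale_source[OF next_round] by (simp add: ghz_image_mat_scale)
    then have "LOCC_transformable (ghz_image mat_id M mat_id) \<phi>"
      by (rule LOCC_transformable_local_unitaries[rotated 3])
        (simp_all add: kraus_complete_shift_phase kraus_complete_mat_id norm_dft)
    then show "LOCC_transformable (apply_local 1 M (ghz_image mat_id mat_id mat_id)) \<phi>"
      by (simp add: apply_local_ghz_image)
  qed simp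
qed

lemma LOCC_charlie_round:
  fixes C :: "3 \<Rightarrow> 3 \<Rightarrow> complex"
  assumes unit_columns: "\<And>k. gram C k k = 1"
    and next_round: "LOCC_transformable (ghz_image mat_id B C) \<phi>"
  shows "LOCC_transformable (ghz_image mat_id B mat_id) \<phi>"
proof -
  define \<gamma> where "\<gamma> = complex_of_real (1 / sqrt 3)"
  have \<gamma>: "cnj \<gamma> * \<gamma> * 3 = 1"
    using cnj_inverse_sqrt[of 3] by (simp add: \<gamma>_def)
  have "kraus_complete [mat_mul M (shift_phase 0 f). M \<leftarrow> [mat_scale \<gamma> C], f \<leftarrow> map dft [0, 1, 2]]"
  proof (rule kraus_complete_dephased)
    fix k l :: 3
    show "(\<Sum>M\<leftarrow>[mat_scale \<gamma> C]. gram M k l) * (\<Sum>f\<leftarrow>map dft [0, 1, 2]. cnj (f k) * f l)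
        = (if k = l then 1 else 0)"
      by (simp only: dft_orthogonal) (simp add: gram_mat_scale unit_columns \<gamma>)
  qed
  then show ?thesis
  proof (rule LOCC_transformable_measurement[of 2, rotated])
    fix M
    assume "M \<in> set [mat_mul M (shift_phase 0 f). M \<leftarrow> [mat_scale \<gamma> C], f \<leftarrow> map dft [0, 1, 2]]"
    then obtain j where M: "M = mat_mul (mat_scale \<gamma> C) (shift_phase 0 (dft j))"
      by auto
    have "ghz_image (mat_mul (shift_phase 0 (\<lambda>k. cnj (dft j k))) mat_id) (mat_mul mat_id B) (mat_mul mat_id M)
        = ghz_image (mat_mul mat_id (shift_phase 0 (\<lambda>k. cnj (dft j k))))
          (mat_mul B (shift_phase 0 (\<lambda>_. 1))) M"
      by (simp add: shift_phase_0_one)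
    also have "\<dots> = ghz_image mat_id B (mat_scale \<gamma> C)"
      unfolding M by (rule ghz_image_shift_phase) (simp add: dft_unimodular)
    finally have "LOCC_transformable (ghz_image (mat_mul (shift_phase 0 (\<lambda>k. cnj (dft j k))) mat_id)
        (mat_mul mat_id B) (mat_mul mat_id M)) \<phi>"
      using LOCC_transformable_scale_source[OF next_round] by (simp add: ghz_image_mat_scale)
    then have "LOCC_transformable (ghz_image mat_id B M) \<phi>"
      by (rule LOCC_transformable_local_unitaries[rotated 3])
        (simp_all add: kraus_complete_shift_phase kraus_complete_mat_id norm_dft)
    then show "LOCC_transformable (apply_local 2 M (ghz_image mat_id B mat_id)) \<phi>"
      by (simp add: apply_local_ghz_image)
  qed simp
qed

definition sign_flip :: "3 \<Rightarrow> complex" where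
  "sign_flip k = (if k = 0 then 1 else - 1)"

lemma LOCC_alice_round:
  fixes A B C :: "3 \<Rightarrow> 3 \<Rightarrow> complex"
  assumes unit_columns: "\<And>k. gram A k k = 1" and orthogonal: "gram A 1 2 = 0"
    and V: "kraus_complete [V]" "mat_mul V B = mat_mul B (shift_phase 0 sign_flip)"
  shows "LOCC_transformable (ghz_image mat_id B C) (ghz_image A B C)"
proof -
  define \<alpha> where "\<alpha> = complex_of_real (1 / sqrt 2)"
  have \<alpha>: "cnj \<alpha> * \<alpha> * 2 = 1"
    using cnj_inverse_sqrt[of 2] by (simp add: \<alpha>_def)
  have target: "LOCC_transformable (ghz_image (mat_scale \<alpha> A) B C) (ghz_image A B C)"
    unfolding ghz_image_mat_scale by (rule LOCC_transformable_scaled_target)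
  have "kraus_complete [mat_mul M (shift_phase 0 f). M \<leftarrow> [mat_scale \<alpha> A], f \<leftarrow> [\<lambda>_. 1, sign_flip]]"
  proof (rule kraus_complete_dephased)
    fix k l :: 3
    have "gram A 2 1 = 0"
      using gram_swap[of A 2 1] orthogonal by simp
    then show "(\<Sum>M\<leftarrow>[mat_scale \<alpha> A]. gram M k l) * (\<Sum>f\<leftarrow>[\<lambda>_. 1, sign_flip]. cnj (f k) * f l)
        = (if k = l then 1 else 0)"
      using exhaust_3[of k] exhaust_3[of l] \<alpha> unit_columns orthogonal
      by (auto simp: gram_mat_scale sign_flip_def)
  qed
  then show ?thesis
  proof (rule LOCC_transformable_measurement[of 0, rotated])
    fix M
    assume "M \<in> set [mat_mul M (shift_phase 0 f). M \<leftarrow> [mat_scale \<alpha> A], f \<leftarrow> [\<lambda>_. 1, sign_flip]]"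
    then consider "M = mat_scale \<alpha> A" | "M = mat_mul (mat_scale \<alpha> A) (shift_phase 0 sign_flip)"
      by (auto simp: shift_phase_0_one)
    then show "LOCC_transformable (apply_local 0 M (ghz_image mat_id B C)) (ghz_image A B C)"
    proof cases
      case 1
      then show ?thesis
        using target by (simp add: apply_local_ghz_image)
    next
      case 2
      have "ghz_image (mat_mul mat_id M) (mat_mul V B) (mat_mul mat_id C)
          = ghz_image M (mat_mul B (shift_phase 0 sign_flip)) (mat_mul C (shift_phase 0 (\<lambda>_. 1)))"
        by (simp add: V shift_phase_0_one)
      also have "\<dots> = ghz_image (mat_scale \<alpha> A) B C"
        unfolding 2 by (rule ghz_image_shift_phase) (simp add: sign_flip_def)
      finally have "LOCC_transformable (ghz_image (mat_mul mat_id M) (mat_mul V B) (mat_mul mat_id C))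
          (ghz_image A B C)"
        using target by simp
      then have "LOCC_transformable (ghz_image M B C) (ghz_image A B C)"
        by (rule LOCC_transformable_local_unitaries[rotated 3]) (simp_all add: kraus_complete_mat_id V)
      then show ?thesis
        by (simp add: apply_local_ghz_image)
    qed
  qed simp
qed

definition householder :: "('n::finite \<Rightarrow> complex) \<Rightarrow> 'n \<Rightarrow> 'n \<Rightarrow> complex" where
  "householder u i j = mat_id i j - 2 * u i * cnj (u j)"

lemma mat_mul_householder: "mat_mul (householder u) B i k = B i k - 2 * u i * cinner u (\<lambda>m. B m k)"
proof -
  have "mat_mul (householder u) B i k = (\<Sum>m\<in>UNIV. mat_id i m * B m k) - 2 * u i * cinner u (\<lambda>m. B m k)"
    by (simp add: mat_mul_def householder_def cinner_def right_diff_distrib sum_subtractf sum_distrib_left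
        ac_simps)
  also have "(\<Sum>m\<in>UNIV. mat_id i m * B m k) = B i k"
    by (metis mat_mul_def mat_mul_mat_id_left)
  finally show ?thesis .
qed

lemma gram_householder:
  assumes "cinner u u = 1"
  shows "gram (householder u) = mat_id"
proof (intro ext)
  fix j l
  have "cinner u (\<lambda>m. mat_id m l) = cnj (u l)"
    by (simp add: cinner_def mat_id_def if_distrib cong: if_cong)
  moreover have "cinner u (\<lambda>m. householder u m l) = cinner u (\<lambda>m. mat_id m l) - 2 * cinner u u * cnj (u l)"
    by (simp add: cinner_def householder_def right_diff_distrib sum_subtractf sum_distrib_left
        sum_distrib_right ac_simps)
  ultimately have column: "cinner u (\<lambda>m. householder u m l) = - cnj (u l)"
    using assms by simp
  have "cnj (householder u i j) = householder u j i" for i j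
    by (simp add: householder_def mat_id_def)
  then have "gram (householder u) j l = mat_mul (householder u) (householder u) j l"
    by (simp add: gram_def cinner_def mat_mul_def)
  also have "\<dots> = householder u j l + 2 * u j * cnj (u l)"
    by (simp add: mat_mul_householder column)
  finally show "gram (householder u) j l = mat_id j l"
    by (simp add: householder_def)
qed

lemma kraus_complete_householder:
  fixes u :: "3 \<Rightarrow> complex"
  assumes "cinner u u = 1"
  shows "kraus_complete [householder u]"
  using gram_householder[OF assms] by (simp add: kraus_complete_iff_gram mat_id_def)

lemma householder_sign_flip:
  assumes "cinner u u = 1" "cinner u (\<lambda>i. B i 0) = 0" "\<And>i. B i 1 = t1 * u i" "\<And>i. B i 2 = t2 * u i"
  shows "mat_mul (householder u) B = mat_mul B (shift_phase 0 sign_flip)"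
proof (intro ext)
  fix i and k :: 3
  have "cinner u (\<lambda>i. B i 1) = t1" "cinner u (\<lambda>i. B i 2) = t2"
    using assms cinner_scale_right[of u] by simp_all
  then show "mat_mul (householder u) B i k = mat_mul B (shift_phase 0 sign_flip) i k"
    using exhaust_3[of k] assms
    by (auto simp: mat_mul_householder mat_mul_shift_phase sign_flip_def)
qed

definition ghz3_factors ::
  "('m::finite \<Rightarrow> 3 \<Rightarrow> complex) \<Rightarrow> ('m \<Rightarrow> 3 \<Rightarrow> complex) \<Rightarrow> ('m \<Rightarrow> 3 \<Rightarrow> complex) \<Rightarrow> bool"
  where "ghz3_factors A B C \<longleftrightarrow>
    (\<forall>k. gram A k k = 1) \<and> gram A 1 2 = 0 \<and> (\<forall>k. gram C k k = 1) \<and>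
    (\<exists>u t1 t2. cinner u u = 1 \<and> cinner u (\<lambda>i. B i 0) = 0 \<and> (\<forall>i. B i 1 = t1 * u i) \<and> (\<forall>i. B i 2 = t2 * u i))"

lemma GHZ3_eq_ghz_image:
  "GHZ3 = (\<lambda>a b c. complex_of_real (1 / sqrt 3) * ghz_image mat_id mat_id mat_id a b c)"
proof (intro ext)
  fix a b c :: 3
  have terms: "(\<lambda>k. mat_id a k * mat_id b k * mat_id c k)
      = (\<lambda>k. if k = a then (if a = b \<and> b = c then 1 else 0) else 0)"
    by (auto simp: mat_id_def)
  show "GHZ3 a b c = complex_of_real (1 / sqrt 3) * ghz_image mat_id mat_id mat_id a b c"
    unfolding ghz_image_def terms by (simp add: GHZ3_def)
qed

lemma LOCC_transformable_GHZ3_ghz_image: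
  fixes A B C :: "3 \<Rightarrow> 3 \<Rightarrow> complex"
  assumes factors: "ghz3_factors A B C" and nonzero: "B i k \<noteq> 0"
  shows "LOCC_transformable GHZ3 (ghz_image A B C)"
proof -
  obtain u t1 t2 where u: "cinner u u = 1" "cinner u (\<lambda>i. B i 0) = 0"
      "\<And>i. B i 1 = t1 * u i" "\<And>i. B i 2 = t2 * u i"
    using factors unfolding ghz3_factors_def by blast
  have "LOCC_transformable (ghz_image mat_id B C) (ghz_image A B C)"
    using factors kraus_complete_householder[OF u(1)] householder_sign_flip[OF u]
    by (intro LOCC_alice_round) (auto simp: ghz3_factors_def)
  then have "LOCC_transformable (ghz_image mat_id B mat_id) (ghz_image A B C)"
    using factors by (intro LOCC_charlie_round) (auto simp: ghz3_factors_def)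
  then have "LOCC_transformable (ghz_image mat_id mat_id mat_id) (ghz_image A B C)"
    using nonzero by (rule LOCC_bob_round[rotated])
  then show ?thesis
    unfolding GHZ3_eq_ghz_image by (rule LOCC_transformable_scale_source)
qed

lemma binary_quadratic_form_isotropic:
  fixes a b c :: complex
  obtains u v where "u \<noteq> 0 \<or> v \<noteq> 0" "a * u\<^sup>2 + b * u * v + c * v\<^sup>2 = 0"
proof (cases "a = 0")
  case True
  then show ?thesis
    using that[of 1 0] by simp
next
  case False
  define u where "u = (- b + csqrt (b\<^sup>2 - 4 * a * c)) / (2 * a)"
  have "(2 * a * u + b)\<^sup>2 = b\<^sup>2 - 4 * a * c"
    unfolding u_def using False by (simp add: field_simps)
  then have "4 * a * (a * u\<^sup>2 + b * u + c) = 0"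
    by (simp add: algebra_simps power2_eq_square)
  then show ?thesis
    using that[of u 1] False by simp
qed

text \<open>The determinant of Bob's slice \<open>\<langle>g|\<^sub>B \<phi>\<close> is a quadratic form in \<open>cnj g\<close>, so some
  unit vector \<open>g\<close> makes that slice singular.\<close>
lemma exists_unit_singular_slice:
  fixes \<phi> :: qubit_state
  obtains g where "cinner g g = 1"
    "cinner g (\<lambda>y. \<phi> 0 y 0) * cinner g (\<lambda>y. \<phi> 1 y 1) = cinner g (\<lambda>y. \<phi> 0 y 1) * cinner g (\<lambda>y. \<phi> 1 y 0)"
proof -
  define a where "a = \<phi> 0 0 0 * \<phi> 1 0 1 - \<phi> 0 0 1 * \<phi> 1 0 0"
  define b where "b = \<phi> 0 0 0 * \<phi> 1 1 1 + \<phi> 0 1 0 * \<phi> 1 0 1 - \<phi> 0 0 1 * \<phi> 1 1 0 - \<phi> 0 1 1 * \<phi> 1 0 0"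
  define c where "c = \<phi> 0 1 0 * \<phi> 1 1 1 - \<phi> 0 1 1 * \<phi> 1 1 0"
  obtain u v where uv: "u \<noteq> 0 \<or> v \<noteq> 0" and isotropic: "a * u\<^sup>2 + b * u * v + c * v\<^sup>2 = 0"
    by (rule binary_quadratic_form_isotropic)
  define R where "R = complex_of_real (sqrt ((cmod u)\<^sup>2 + (cmod v)\<^sup>2))"
  have R_nonzero: "R \<noteq> 0"
    using uv by (simp add: R_def)
  have R_real: "cnj R = R"
    by (simp add: R_def)
  have "R * R = complex_of_real ((cmod u)\<^sup>2 + (cmod v)\<^sup>2)"
    by (simp add: R_def flip: of_real_mult)
  also have "\<dots> = u * cnj u + v * cnj v"
    by (simp only: of_real_add complex_norm_square)
  finally have R_square: "R * R = u * cnj u + v * cnj v" .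
  define g where "g y = (if y = 0 then cnj u else cnj v) / R" for y :: 2
  have slice: "cinner g w = (u * w 0 + v * w 1) / R" for w
    by (simp add: cinner_def sum_UNIV_2 g_def R_real add_divide_distrib)
  show ?thesis
  proof (rule that)
    show "cinner g g = 1"
      using R_nonzero R_real by (simp add: slice g_def field_simps flip: R_square)
    have "(u * \<phi> 0 0 0 + v * \<phi> 0 1 0) * (u * \<phi> 1 0 1 + v * \<phi> 1 1 1)
        - (u * \<phi> 0 0 1 + v * \<phi> 0 1 1) * (u * \<phi> 1 0 0 + v * \<phi> 1 1 0) = 0"
      using isotropic unfolding a_def b_def c_def by (simp add: algebra_simps power2_eq_square)
    then show "cinner g (\<lambda>y. \<phi> 0 y 0) * cinner g (\<lambda>y. \<phi> 1 y 1)
        = cinner g (\<lambda>y. \<phi> 0 y 1) * cinner g (\<lambda>y. \<phi> 1 y 0)"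
      using R_nonzero by (simp add: slice field_simps)
  qed
qed

lemma singular_2x2_outer_product:
  fixes P :: "2 \<Rightarrow> 2 \<Rightarrow> complex"
  assumes singular: "P 0 0 * P 1 1 = P 0 1 * P 1 0"
  obtains p q where "\<And>x z. P x z = p x * q z"
proof (cases "P 0 0 = 0")
  case False
  have "P x z = P x 0 / P 0 0 * P 0 z" for x z
    using exhaust_2[of x] exhaust_2[of z] False singular by (auto simp: field_simps)
  then show ?thesis by (rule that)
next
  case zero: True
  show ?thesis
  proof (cases "P 0 1 = 0")
    case False
    then have "P 1 0 = 0"
      using zero singular by simp
    have "P x z = P x 1 / P 0 1 * P 0 z" for x z
      using exhaust_2[of x] exhaust_2[of z] False zero \<open>P 1 0 = 0\<close> by (auto simp: field_simps)
    then show ?thesis by (rule that)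
  next
    case True
    have "P x z = (if x = 0 then 0 else 1) * P 1 z" for x z
      using exhaust_2[of x] exhaust_2[of z] True zero by auto
    then show ?thesis by (rule that)
  qed
qed

lemma exists_unit_multiple:
  fixes v :: "'n::finite \<Rightarrow> complex"
  obtains s u where "cinner u u = 1" "\<And>x. v x = s * u x"
proof (cases "\<forall>x. v x = 0")
  case True
  define u :: "'n \<Rightarrow> complex" where "u x = (if x = undefined then 1 else 0)" for x
  have "cinner u u = 1"
    by (simp add: cinner_def u_def if_distrib cong: if_cong)
  then show ?thesis
    using True by (intro that[of u 0]) simp_all
next
  case False
  then obtain x0 where "v x0 \<noteq> 0" by blast
  define N where "N = (\<Sum>x\<in>UNIV. (cmod (v x))\<^sup>2)"
  have "0 < (cmod (v x0))\<^sup>2"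
    using \<open>v x0 \<noteq> 0\<close> by simp
  also have "\<dots> \<le> N"
    unfolding N_def by (rule member_le_sum) auto
  finally have "N > 0" .
  define s where "s = complex_of_real (sqrt N)"
  have s: "s \<noteq> 0" "cnj s * s = complex_of_real N"
    using \<open>N > 0\<close> by (simp_all add: s_def flip: of_real_mult)
  have "cinner (\<lambda>x. v x / s) (\<lambda>x. v x / s) = cinner v v / (cnj s * s)"
    unfolding cinner_def by (simp add: sum_divide_distrib field_simps)
  also have "\<dots> = 1"
    using s \<open>N > 0\<close> by (simp only: cinner_self flip: N_def) simp
  finally show ?thesis
    using s by (intro that[of "\<lambda>x. v x / s" s]) simp_all
qed

definition qubit_perp :: "(2 \<Rightarrow> complex) \<Rightarrow> 2 \<Rightarrow> complex" where
  "qubit_perp g x = (if x = 0 then - cnj (g 1) else cnj (g 0))"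

lemma qubit_perp_simps [simp]: "qubit_perp g 0 = - cnj (g 1)" "qubit_perp g 1 = cnj (g 0)"
  by (simp_all add: qubit_perp_def)

lemma qubit_orthonormal_basis:
  assumes "cinner g g = 1"
  shows "cinner (qubit_perp g) (qubit_perp g) = 1" "cinner (qubit_perp g) g = 0"
    and "v y = g y * cinner g v + qubit_perp g y * cinner (qubit_perp g) v"
proof -
  have unit: "cnj (g 0) * g 0 + cnj (g 1) * g 1 = 1"
    using assms by (simp add: cinner_def sum_UNIV_2)
  then show "cinner (qubit_perp g) (qubit_perp g) = 1" "cinner (qubit_perp g) g = 0"
    by (simp_all add: cinner_def sum_UNIV_2 mult.commute add.commute)
  have "g y * cinner g v + qubit_perp g y * cinner (qubit_perp g) v
      = (cnj (g 0) * g 0 + cnj (g 1) * g 1) * v y"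
    using exhaust_2[of y] by (auto simp: cinner_def sum_UNIV_2 algebra_simps)
  then show "v y = g y * cinner g v + qubit_perp g y * cinner (qubit_perp g) v"
    using unit by simp
qed

text \<open>Expanding Bob's qubit in an orthonormal basis \<open>g, h\<close> with singular slice \<open>\<langle>g|\<^sub>B \<phi> = p \<otimes> q\<close>
  gives \<open>\<phi> = p \<otimes> g \<otimes> q + |0\<rangle> \<otimes> h \<otimes> \<langle>0 h|\<phi> + |1\<rangle> \<otimes> h \<otimes> \<langle>1 h|\<phi>\<close>, a sum of three product terms.\<close>
lemma qubit_state_ghz3_factors:
  fixes \<phi> :: qubit_state
  obtains A B C :: "2 \<Rightarrow> 3 \<Rightarrow> complex" where "ghz3_factors A B C" "\<phi> = ghz_image A B C"
proof -
  obtain g where g: "cinner g g = 1" and singular: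
    "cinner g (\<lambda>y. \<phi> 0 y 0) * cinner g (\<lambda>y. \<phi> 1 y 1) = cinner g (\<lambda>y. \<phi> 0 y 1) * cinner g (\<lambda>y. \<phi> 1 y 0)"
    by (rule exists_unit_singular_slice)
  define h where "h = qubit_perp g"
  define P where "P x z = cinner g (\<lambda>y. \<phi> x y z)" for x z
  define Q where "Q x z = cinner h (\<lambda>y. \<phi> x y z)" for x z
  have expand: "\<phi> x y z = g y * P x z + h y * Q x z" for x y z
    unfolding P_def Q_def h_def by (rule qubit_orthonormal_basis(3)[OF g])
  obtain p q where pq: "\<And>x z. P x z = p x * q z"
    using singular_2x2_outer_product[of P] singular unfolding P_def by blast
  obtain sp p' where p': "cinner p' p' = 1" "\<And>x. p x = sp * p' x"
    using exists_unit_multiple[of p] by metis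
  obtain sq q' where q': "cinner q' q' = 1" "\<And>z. q z = sq * q' z"
    using exists_unit_multiple[of q] by metis
  obtain t0 w0 where w0: "cinner w0 w0 = 1" "\<And>z. Q 0 z = t0 * w0 z"
    using exists_unit_multiple[of "Q 0"] by metis
  obtain t1 w1 where w1: "cinner w1 w1 = 1" "\<And>z. Q 1 z = t1 * w1 z"
    using exists_unit_multiple[of "Q 1"] by metis
  define A :: "2 \<Rightarrow> 3 \<Rightarrow> complex" where
    "A x k = (if k = 0 then p' x else if k = 1 then mat_id x 0 else mat_id x 1)" for x k
  define B :: "2 \<Rightarrow> 3 \<Rightarrow> complex" where
    "B y k = (if k = 0 then sp * sq * g y else if k = 1 then t0 * h y else t1 * h y)" for y k
  define C :: "2 \<Rightarrow> 3 \<Rightarrow> complex" where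
    "C z k = (if k = 0 then q' z else if k = 1 then w0 z else w1 z)" for z k
  show ?thesis
  proof (rule that)
    have "cinner h h = 1" "cinner h g = 0"
      unfolding h_def using qubit_orthonormal_basis[OF g] by simp_all
    moreover have "gram A k k = 1" "gram C k k = 1" for k
      using exhaust_3[of k] p' q' w0 w1
      by (auto simp: gram_def A_def C_def cinner_mat_id_columns) (simp_all add: mat_id_def)
    moreover have "gram A 1 2 = 0"
      by (simp add: gram_def A_def cinner_mat_id_columns) (simp add: mat_id_def)
    ultimately show "ghz3_factors A B C"
      unfolding ghz3_factors_def by (auto simp: B_def cinner_scale_right)
    show "\<phi> = ghz_image A B C"
    proof (intro ext)
      fix x y z
      have "Q x z = mat_id x 0 * (t0 * w0 z) + mat_id x 1 * (t1 * w1 z)"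
        using exhaust_2[of x] w0 w1 by (auto simp: mat_id_def)
      then show "\<phi> x y z = ghz_image A B C x y z"
        by (simp add: expand pq p' q' ghz_image_def sum_UNIV_3 A_def B_def C_def algebra_simps)
    qed
  qed
qed

lemma emb_simps [simp]: "emb 0 = 0" "emb 1 = 1"
  by (simp_all add: emb_def bit0.Rep_0 bit0.Rep_1)

definition embed_vec :: "(2 \<Rightarrow> complex) \<Rightarrow> 3 \<Rightarrow> complex" where
  "embed_vec v i = (\<Sum>x\<in>UNIV. if i = emb x then v x else 0)"

lemma embed_vec_simps [simp]: "embed_vec v 0 = v 0" "embed_vec v 1 = v 1" "embed_vec v 2 = 0"
  by (simp_all add: embed_vec_def sum_UNIV_2)

lemma embed_vec_emb [simp]: "embed_vec v (emb x) = v x"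
  using exhaust_2[of x] by auto

lemma cinner_embed_vec: "cinner (embed_vec u) (embed_vec v) = cinner u v"
  by (simp add: cinner_def sum_UNIV_2 sum_UNIV_3)

definition embed_rows :: "(2 \<Rightarrow> 'k \<Rightarrow> complex) \<Rightarrow> 3 \<Rightarrow> 'k \<Rightarrow> complex" where
  "embed_rows X i k = embed_vec (\<lambda>x. X x k) i"

lemma gram_embed_rows: "gram (embed_rows X) = gram X"
  using cinner_embed_vec by (simp add: gram_def embed_rows_def fun_eq_iff)

lemma ghz3_factors_embed_rows:
  assumes "ghz3_factors A B C"
  shows "ghz3_factors (embed_rows A) (embed_rows B) (embed_rows C)"
proof -
  obtain u t1 t2 where u: "cinner u u = 1" "cinner u (\<lambda>y. B y 0) = 0"
      "\<And>y. B y 1 = t1 * u y" "\<And>y. B y 2 = t2 * u y"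
    using assms unfolding ghz3_factors_def by blast
  have "embed_rows B i 1 = t1 * embed_vec u i" "embed_rows B i 2 = t2 * embed_vec u i" for i
    using exhaust_3[of i] by (auto simp: embed_rows_def u)
  moreover have "cinner (embed_vec u) (embed_vec u) = 1" "cinner (embed_vec u) (\<lambda>i. embed_rows B i 0) = 0"
    using u cinner_embed_vec[of u "\<lambda>y. B y 0"] by (simp_all add: cinner_embed_vec embed_rows_def)
  ultimately show ?thesis
    using assms unfolding ghz3_factors_def gram_embed_rows by blast
qed

lemma embed_state_eq_embed_vec:
  "embed_state \<phi> a b c = embed_vec (\<lambda>x. embed_vec (\<lambda>y. embed_vec (\<lambda>z. \<phi> x y z) c) b) a"
proof -
  have pull_if: "(if P then sum f UNIV else 0) = (\<Sum>x\<in>UNIV. if P then f x else 0)"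
    for P and f :: "2 \<Rightarrow> complex"
    by simp
  show ?thesis
    unfolding embed_state_def embed_vec_def pull_if by (intro sum.cong refl) auto
qed

lemma embed_state_ghz_image:
  "embed_state (ghz_image A B C) = ghz_image (embed_rows A) (embed_rows B) (embed_rows C)"
proof (intro ext)
  fix a b c :: 3
  show "embed_state (ghz_image A B C) a b c = ghz_image (embed_rows A) (embed_rows B) (embed_rows C) a b c"
    unfolding embed_state_eq_embed_vec using exhaust_3[of a] exhaust_3[of b] exhaust_3[of c]
    by (auto simp: ghz_image_def embed_rows_def)
qed

theorem theorem2:
  fixes \<phi> :: qubit_state
  assumes "normalized_qubit \<phi>"
  shows "LOCC_transformable GHZ3 (embed_state \<phi>)"
proof -
  obtain A B C :: "2 \<Rightarrow> 3 \<Rightarrow> complex" where factors: "ghz3_factors A B C" and \<phi>: "\<phi> = ghz_image A B C"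
    by (rule qubit_state_ghz3_factors)
  have "\<exists>y k. B y k \<noteq> 0"
  proof (rule ccontr)
    assume "\<not> (\<exists>y k. B y k \<noteq> 0)"
    then have "\<phi> = (\<lambda>_ _ _. 0)"
      by (simp add: \<phi> ghz_image_def fun_eq_iff)
    then show False
      using assms by (simp add: normalized_qubit_def)
  qed
  then obtain y k where "embed_rows B (emb y) k \<noteq> 0"
    by (auto simp: embed_rows_def)
  then show ?thesis
    unfolding \<phi> embed_state_ghz_image
    by (rule LOCC_transformable_GHZ3_ghz_image[OF ghz3_factors_embed_rows[OF factors]])
qed

end
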